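(* Let $d$ be a compatible metric on the Cantor space $\mathbf{C}$ and let $h:\mathbf{C}\to\mathbf{C}$ be a homeomorphism which is an isometry such that the orbit $\mathrm{orb}(x,h)$ is nowhere dense in $\mathbf{C}$ for every $x\in\mathbf{C}$. Then there exist $\Phi=(\varphi^L,\varphi^U)$ such that $\mathbf{F}_\Phi$ is a Lelek fence and a homeomorphism $\hat h$ of $\mathbf{F}_\Phi$ which is an isometry such that $h$ is a factor of $\hat h$. Moreover, if $\{K_n\}$ is a sequence of closed, $h$-invariant, nowhere dense subsets of $\mathbf{C}$, then $\Phi$ can be chosen so that $\varphi^U(x)>0$ for all $x\in\bigcup_n K_n$.
   Context: For $\Phi=(\varphi^L,\varphi^U)$ with $\varphi^L,\varphi^U:\mathbf{C}\to[0,1]$, $\varphi^L$ lower semicontinuous, $\varphi^U$ upper semicontinuous, $\varphi^L\le\varphi^U$, the fence is $\mathbf{F}_\Phi=\{(x,t)\in\mathbf{C}\times[0,1]:\varphi^L(x)\le t\le\varphi^U(x)\}$ with the maximum metric of $\mathbf{C}\times[0,1]$. $\mathbf{F}_\Phi$ is a Lelek fence if $\varphi^L\equiv0$, $\varphi^U$ is positive on a dense subset of $\mathbf{C}$, and the graph $\{(x,\varphi^U(x)):x\in\mathbf{C}\}$ is dense in $\mathbf{F}_\Phi$. *)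

theory Defs
  imports "HOL-Analysis.Analysis"
begin

text \<open>The Cantor space, realised as the standard middle-thirds Cantor set in the reals.\<close>
definition cantor_set :: "real set" where
  "cantor_set = {x. \<exists>b :: nat \<Rightarrow> bool. x = (\<Sum>n. (if b n then 2 else 0) / 3 ^ (Suc n))}"

definition compatible_metric :: "real set \<Rightarrow> (real \<Rightarrow> real \<Rightarrow> real) \<Rightarrow> bool" where
  "compatible_metric S d \<longleftrightarrow> Metric_space S d \<and> Metric_space.mtopology S d = top_of_set S"

definition isometry_on :: "'a set \<Rightarrow> ('a \<Rightarrow> 'a \<Rightarrow> real) \<Rightarrow> ('a \<Rightarrow> 'a) \<Rightarrow> bool" where
  "isometry_on S d f \<longleftrightarrow> (\<forall>x\<in>S. \<forall>y\<in>S. d (f x) (f y) = d x y)"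

definition orb :: "'a \<Rightarrow> ('a \<Rightarrow> 'a) \<Rightarrow> 'a set" where
  "orb x h = {(h ^^ n) x | n. True}"

definition nowhere_dense_in :: "'a::topological_space set \<Rightarrow> 'a set \<Rightarrow> bool" where
  "nowhere_dense_in A S \<longleftrightarrow> A \<subseteq> S \<and>
     (top_of_set S) interior_of ((top_of_set S) closure_of A) = {}"

definition lower_semicont_on :: "'a::topological_space set \<Rightarrow> ('a \<Rightarrow> real) \<Rightarrow> bool" where
  "lower_semicont_on S f \<longleftrightarrow> (\<forall>a. openin (top_of_set S) {x\<in>S. f x > a})"

definition upper_semicont_on :: "'a::topological_space set \<Rightarrow> ('a \<Rightarrow> real) \<Rightarrow> bool" where
  "upper_semicont_on S f \<longleftrightarrow> (\<forall>a. openin (top_of_set S) {x\<in>S. f x < a})"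

definition admissible_pair :: "(real \<Rightarrow> real) \<Rightarrow> (real \<Rightarrow> real) \<Rightarrow> bool" where
  "admissible_pair phiL phiU \<longleftrightarrow>
     (\<forall>x\<in>cantor_set. 0 \<le> phiL x \<and> phiL x \<le> phiU x \<and> phiU x \<le> 1) \<and>
     lower_semicont_on cantor_set phiL \<and> upper_semicont_on cantor_set phiU"

definition fence :: "(real \<Rightarrow> real) \<Rightarrow> (real \<Rightarrow> real) \<Rightarrow> (real \<times> real) set" where
  "fence phiL phiU = {(x, t). x \<in> cantor_set \<and> 0 \<le> t \<and> t \<le> 1 \<and> phiL x \<le> t \<and> t \<le> phiU x}"

definition max_metric :: "(real \<Rightarrow> real \<Rightarrow> real) \<Rightarrow> real \<times> real \<Rightarrow> real \<times> real \<Rightarrow> real" where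
  "max_metric d p q = max (d (fst p) (fst q)) \<bar>snd p - snd q\<bar>"

text \<open>Lelek fence. Density of the graph is taken in the topology of C \<times> [0,1], which
  (d being compatible) is the topology of the maximum metric, i.e. the Euclidean one.\<close>
definition Lelek_fence :: "(real \<Rightarrow> real) \<Rightarrow> (real \<Rightarrow> real) \<Rightarrow> bool" where
  "Lelek_fence phiL phiU \<longleftrightarrow>
     (\<forall>x\<in>cantor_set. phiL x = 0) \<and>
     (\<exists>D \<subseteq> cantor_set. cantor_set \<subseteq> closure D \<and> (\<forall>x\<in>D. phiU x > 0)) \<and>
     fence phiL phiU \<subseteq> closure {(x, phiU x) | x. x \<in> cantor_set}"

definition is_factor :: "'b::topological_space set \<Rightarrow> ('b \<Rightarrow> 'b) \<Rightarrow> 'a::topological_space set \<Rightarrow> ('a \<Rightarrow> 'a) \<Rightarrow> bool" where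
  "is_factor Y g X f \<longleftrightarrow> (\<exists>\<pi>. continuous_on X \<pi> \<and> \<pi> ` X = Y \<and> (\<forall>p\<in>X. \<pi> (f p) = g (\<pi> p)))"

end

theory Submission
  imports Defs
begin

text \<open>For an isometry h of a compact metric space every point is recurrent. Hence
  the distance D(y, z) between the forward orbits of y and z is h-invariant, 1-Lipschitz, and
  bounded below by the distance from y to the orbit of z. Every bump max w (D(y, z) / r) is
  therefore continuous and h-invariant, and so is the upper function phi, the infimum of 1 and
  of a sequence of bumps (z_i, w_i, r_i). The bumps are chosen recursively along an enumeration
  of all rational triples (center, radius, height q): if possible, z_i is a point of the
  rational ball at which all earlier bumps exceed q and which avoids the nowhere dense closures
  of the orbits of the earlier centers and the sets K_m, m \<le> i; then w_i = q and r_i is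
  smaller than the distance from z_i to all these sets. Consequently phi (z_i) = q, which makes the
  graph of phi dense in the fence under it, phi is positive at all centers and on all K_m,
  and h \<times> id is an isometry of the fence of (0, phi) with the first projection as factor map.\<close>

section \<open>The Cantor set\<close>

lemma compact_cantor_set: "compact cantor_set"
proof -
  define f :: "(nat \<Rightarrow> bool) \<Rightarrow> real" where
    "f = (\<lambda>b. \<Sum>n. (if b n then 2 else 0) / 3 ^ Suc n)"
  have "compact (UNIV :: (nat \<Rightarrow> bool) set)"
    using compact_space_product_topology[of "\<lambda>_. euclidean :: bool topology" UNIV]
    by (simp add: euclidean_product_topology compact_space_def finite_imp_compact)
  moreover have "continuous_on UNIV f"
  proof (rule uniform_limit_theorem)
    have "summable (\<lambda>n. 2 / 3 ^ Suc n :: real)"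
      using summable_mult[OF summable_geometric[of "1/3 :: real"], of "2/3"]
      by (simp add: field_simps)
    then show "uniform_limit UNIV (\<lambda>n b. \<Sum>i<n. (if b i then 2 else 0) / 3 ^ Suc i) f sequentially"
      unfolding f_def by (rule Weierstrass_m_test[rotated]) auto
    have "continuous_on UNIV (\<lambda>b :: nat \<Rightarrow> bool. g (b i))" for g :: "bool \<Rightarrow> real" and i
      by (rule continuous_on_compose2[of UNIV g]) auto
    then show "\<forall>\<^sub>F n in sequentially. continuous_on UNIV
            (\<lambda>b :: nat \<Rightarrow> bool. \<Sum>i<n. (if b i then 2 else 0) / 3 ^ Suc i :: real)"
      by (intro always_eventually allI continuous_on_sum) auto
  qed auto
  moreover have "cantor_set = f ` UNIV"
    unfolding cantor_set_def f_def by auto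
  ultimately show ?thesis
    by (metis compact_continuous_image)
qed

lemma cantor_set_nonempty: "cantor_set \<noteq> {}"
  unfolding cantor_set_def by (auto intro: exI[of _ "\<lambda>_. False"])

section \<open>Orbit distance of an isometry\<close>

lemma (in Metric_space) continuous_map_mtopology_if_Lipschitz:
  fixes f :: "'a \<Rightarrow> real"
  assumes "\<And>x y. x \<in> M \<Longrightarrow> y \<in> M \<Longrightarrow> \<bar>f x - f y\<bar> \<le> L * d x y"
  shows "continuous_map mtopology euclideanreal f"
proof -
  have "Lipschitz_continuous_map (metric (M, d)) euclidean_metric f"
    using assms by (auto simp: Lipschitz_continuous_map_def dist_real_def)
  then show ?thesis
    using Lipschitz_continuous_imp_continuous_map by fastforce
qed

locale isometric_dynamics = Metric_space M d
  for M :: "'a set" and d +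
  fixes h :: "'a \<Rightarrow> 'a"
  assumes maps_to: "h ` M \<subseteq> M"
    and isometry: "isometry_on M d h"
    and compact: "compactin mtopology M"
begin

lemma funpow_in: "x \<in> M \<Longrightarrow> (h ^^ n) x \<in> M"
  by (induction n) (use maps_to in auto)

lemma orb_subset: "x \<in> M \<Longrightarrow> orb x h \<subseteq> M"
  by (auto simp: orb_def funpow_in)

lemma funpow_isometry: "x \<in> M \<Longrightarrow> y \<in> M \<Longrightarrow> d ((h ^^ n) x) ((h ^^ n) y) = d x y"
  by (induction n) (use isometry funpow_in in \<open>auto simp: isometry_on_def\<close>)

text \<open>Recurrence of isometries: two points of the orbit of x under h^(n+1)
  that are e-close yield, after cancelling the common iterate, a return time N \<ge> n.\<close>
lemma recurrent:
  assumes x: "x \<in> M" and e: "e > 0"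
  shows "\<exists>N\<ge>n. d ((h ^^ N) x) x < e"
proof -
  define \<sigma> where "\<sigma> m = (h ^^ (m * Suc n)) x" for m
  have \<sigma>_in: "\<sigma> m \<in> M" for m
    using funpow_in x by (simp add: \<sigma>_def)
  then obtain l r where l: "l \<in> M" and r: "strict_mono r" and "limitin mtopology (\<sigma> \<circ> r) l sequentially"
    using compact unfolding compactin_sequentially by blast
  then obtain k where k: "\<And>j. j \<ge> k \<Longrightarrow> d (\<sigma> (r j)) l < e/2"
    using e by (fastforce simp: limitin_metric eventually_sequentially dest!: spec[of _ "e/2"])
  define a b where "a = r k" and "b = r (Suc k)"
  have "a < b"
    using r by (simp add: a_def b_def strict_mono_def)
  have "d (\<sigma> a) (\<sigma> b) < e"
    using triangle[OF \<sigma>_in l \<sigma>_in, of a b] k[of k] k[of "Suc k"] commute[of l]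
    by (simp add: a_def b_def)
  moreover have "d (\<sigma> a) (\<sigma> b) = d x ((h ^^ ((b - a) * Suc n)) x)"
  proof -
    have "b * Suc n = (b - a) * Suc n + a * Suc n"
      using \<open>a < b\<close> by (metis add_mult_distrib le_add_diff_inverse2 less_imp_le)
    then have "\<sigma> b = (h ^^ (a * Suc n)) ((h ^^ ((b - a) * Suc n)) x)"
      by (simp add: \<sigma>_def funpow_add add.commute)
    then show ?thesis
      using funpow_isometry funpow_in x by (simp add: \<sigma>_def)
  qed
  moreover have "(b - a) * Suc n \<ge> n"
    using \<open>a < b\<close> by (cases "b - a") auto
  ultimately show ?thesis
    using commute by metis
qed

definition orbit_dist :: "'a \<Rightarrow> 'a \<Rightarrow> real" where
  "orbit_dist y z = (INF (a, b). d ((h ^^ a) y) ((h ^^ b) z))"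

lemma orbit_dist_le: "orbit_dist y z \<le> d ((h ^^ a) y) ((h ^^ b) z)"
  unfolding orbit_dist_def by (rule cINF_lower2[where x="(a, b)"]) (auto intro: bdd_belowI2[of _ 0])

lemma orbit_dist_greatest: "(\<And>a b. c \<le> d ((h ^^ a) y) ((h ^^ b) z)) \<Longrightarrow> c \<le> orbit_dist y z"
  unfolding orbit_dist_def by (rule cINF_greatest) auto

lemma orbit_dist_nonneg: "0 \<le> orbit_dist y z"
  by (rule orbit_dist_greatest) simp

lemma orbit_dist_self: "y \<in> M \<Longrightarrow> orbit_dist y y = 0"
  using orbit_dist_le[of y y 0 0] orbit_dist_nonneg[of y y] by simp

lemma orbit_dist_commute: "orbit_dist y z = orbit_dist z y"
  by (intro antisym orbit_dist_greatest) (metis orbit_dist_le commute)+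

lemma orbit_dist_map_left:
  assumes "y \<in> M" "z \<in> M"
  shows "orbit_dist (h y) z = orbit_dist y z"
proof (rule antisym)
  show "orbit_dist (h y) z \<le> orbit_dist y z"
  proof (rule orbit_dist_greatest)
    fix a b
    have "orbit_dist (h y) z \<le> d ((h ^^ a) (h y)) ((h ^^ Suc b) z)"
      by (rule orbit_dist_le)
    also have "\<dots> = d (h ((h ^^ a) y)) (h ((h ^^ b) z))"
      by (simp add: funpow_swap1)
    also have "\<dots> = d ((h ^^ a) y) ((h ^^ b) z)"
      using isometry funpow_in assms by (simp add: isometry_on_def)
    finally show "orbit_dist (h y) z \<le> d ((h ^^ a) y) ((h ^^ b) z)" .
  qed
  show "orbit_dist y z \<le> orbit_dist (h y) z"
  proof (rule orbit_dist_greatest)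
    fix a b
    show "orbit_dist y z \<le> d ((h ^^ a) (h y)) ((h ^^ b) z)"
      using orbit_dist_le[of y z "Suc a" b] by (simp add: funpow_Suc_right del: funpow.simps)
  qed
qed

lemma orbit_dist_Lipschitz:
  assumes "y \<in> M" "y' \<in> M" "z \<in> M"
  shows "\<bar>orbit_dist y z - orbit_dist y' z\<bar> \<le> d y y'"
proof -
  have one_sided: "orbit_dist y z \<le> d y y' + orbit_dist y' z" if "y \<in> M" "y' \<in> M" for y y'
  proof -
    have "orbit_dist y z - d y y' \<le> orbit_dist y' z"
    proof (rule orbit_dist_greatest)
      fix a b
      have "orbit_dist y z \<le> d ((h ^^ a) y) ((h ^^ b) z)"
        by (rule orbit_dist_le)
      also have "\<dots> \<le> d ((h ^^ a) y) ((h ^^ a) y') + d ((h ^^ a) y') ((h ^^ b) z)"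
        using triangle funpow_in that assms(3) by blast
      also have "\<dots> = d y y' + d ((h ^^ a) y') ((h ^^ b) z)"
        using funpow_isometry that by simp
      finally show "orbit_dist y z - d y y' \<le> d ((h ^^ a) y') ((h ^^ b) z)"
        by simp
    qed
    then show ?thesis by simp
  qed
  show ?thesis
    using one_sided[of y y'] one_sided[of y' y] assms commute[of y y'] by (auto simp: abs_le_iff)
qed

lemma continuous_map_orbit_dist: "z \<in> M \<Longrightarrow> continuous_map mtopology euclideanreal (\<lambda>y. orbit_dist y z)"
  using orbit_dist_Lipschitz by (intro continuous_map_mtopology_if_Lipschitz[of _ 1]) auto

text \<open>By recurrence, the distance between the orbits of z and y is already attained, up to
  any e > 0, by the distances from z itself to the orbit of y.\<close>
lemma orbit_dist_geI:
  assumes z: "z \<in> M" and y: "y \<in> M" and r: "\<And>a. r \<le> d z ((h ^^ a) y)"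
  shows "r \<le> orbit_dist z y"
proof (rule orbit_dist_greatest)
  fix a b
  show "r \<le> d ((h ^^ a) z) ((h ^^ b) y)"
  proof (rule field_le_epsilon)
    fix e :: real assume "e > 0"
    then obtain N where "N \<ge> a" and N: "d ((h ^^ N) z) z < e"
      using recurrent[OF z] by blast
    have "(h ^^ (N - a)) ((h ^^ a) z) = (h ^^ N) z"
      using \<open>N \<ge> a\<close> by (metis funpow_add le_add_diff_inverse2 o_apply)
    moreover have "(h ^^ (N - a)) ((h ^^ b) y) = (h ^^ (N - a + b)) y"
      by (simp add: funpow_add)
    ultimately have eq: "d ((h ^^ a) z) ((h ^^ b) y) = d ((h ^^ N) z) ((h ^^ (N - a + b)) y)"
      by (metis funpow_in funpow_isometry y z)
    have "d z ((h ^^ (N - a + b)) y) \<le> d z ((h ^^ N) z) + d ((h ^^ N) z) ((h ^^ (N - a + b)) y)"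
      using triangle funpow_in z y by blast
    then show "r \<le> d ((h ^^ a) z) ((h ^^ b) y) + e"
      using r[of "N - a + b"] N eq commute[of z "(h ^^ N) z"] by linarith
  qed
qed

lemma orbit_dist_ge_if_disjoint:
  assumes "z \<in> M" "y \<in> M" "mball z r \<inter> orb y h = {}"
  shows "r \<le> orbit_dist z y"
proof (rule orbit_dist_geI)
  fix a
  have "(h ^^ a) y \<in> orb y h"
    by (auto simp: orb_def)
  then show "r \<le> d z ((h ^^ a) y)"
    using assms funpow_in by (meson disjoint_iff in_mball not_le)
qed (use assms in auto)

end

section \<open>An invariant upper function with dense graph\<close>

lemma interior_of_Union_closedin_eq_empty:
  assumes "finite \<A>" "\<And>S. S \<in> \<A> \<Longrightarrow> closedin X S \<and> X interior_of S = {}"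
  shows "X interior_of \<Union>\<A> = {}"
  using assms by (induction \<A> rule: finite_induct) (auto simp: interior_of_union_eq_empty)

locale lelek_construction = isometric_dynamics M d h
  for M :: "real set" and d h +
  fixes K :: "nat \<Rightarrow> real set"
  assumes mtopology_eq: "mtopology = top_of_set M"
    and nonempty: "M \<noteq> {}"
    and orb_nowhere_dense: "\<And>x. x \<in> M \<Longrightarrow> nowhere_dense_in (orb x h) M"
    and K_closed: "\<And>n. closed (K n)"
    and K_invariant: "\<And>n. h ` K n \<subseteq> K n"
    and K_nowhere_dense: "\<And>n. nowhere_dense_in (K n) M"
begin

lemma K_subset: "K n \<subseteq> M"
  using K_nowhere_dense by (simp add: nowhere_dense_in_def)

lemma closedin_K: "closedin (top_of_set M) (K n)"
  using K_closed K_subset by (simp add: closed_subset)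

lemma orb_subset_K: "y \<in> K n \<Longrightarrow> orb y h \<subseteq> K n"
proof -
  assume "y \<in> K n"
  then have "(h ^^ a) y \<in> K n" for a
    by (induction a) (use K_invariant in auto)
  then show ?thesis
    by (auto simp: orb_def)
qed

fun bump :: "real \<times> real \<times> real \<Rightarrow> real \<Rightarrow> real" where
  "bump (z, w, r) y = max w (orbit_dist y z / r)"

lemma continuous_on_bump: "z \<in> M \<Longrightarrow> continuous_on M (bump (z, w, r))"
  using continuous_map_orbit_dist[of z]
  by (simp add: mtopology_eq divide_inverse continuous_on_max continuous_on_mult_right)

fun bumps_min :: "(real \<times> real \<times> real) list \<Rightarrow> real \<Rightarrow> real" where
  "bumps_min [] y = 1"
| "bumps_min (p # ps) y = min (bump p y) (bumps_min ps y)"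

lemma bumps_min_le_bump: "p \<in> set ps \<Longrightarrow> bumps_min ps y \<le> bump p y"
  by (induction ps) auto

lemma bumps_min_greatest: "c \<le> 1 \<Longrightarrow> (\<And>p. p \<in> set ps \<Longrightarrow> c \<le> bump p y) \<Longrightarrow> c \<le> bumps_min ps y"
  by (induction ps) auto

lemma continuous_on_bumps_min: "fst ` set ps \<subseteq> M \<Longrightarrow> continuous_on M (bumps_min ps)"
proof (induction ps)
  case (Cons p ps)
  obtain z w r where "p = (z, w, r)"
    by (cases p)
  with Cons show ?case
    using continuous_on_bump[of z w r] by (auto intro!: continuous_on_min)
qed simp

text \<open>Stage i serves the i-th rational triple: it tries to place a point of height
  query_height i on the graph of phi over query_ball i.\<close>
definition query_center :: "nat \<Rightarrow> real" where
  "query_center i = of_rat (fst (from_nat i :: rat \<times> rat \<times> rat))"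

definition query_radius :: "nat \<Rightarrow> real" where
  "query_radius i = of_rat (fst (snd (from_nat i :: rat \<times> rat \<times> rat)))"

definition query_height :: "nat \<Rightarrow> real" where
  "query_height i = of_rat (snd (snd (from_nat i :: rat \<times> rat \<times> rat)))"

definition query_ball :: "nat \<Rightarrow> real set" where
  "query_ball i = M \<inter> ball (query_center i) (query_radius i)"

lemma openin_query_ball: "openin (top_of_set M) (query_ball i)"
  by (auto simp: query_ball_def)

lemma exists_query:
  assumes "x \<in> M" "e > 0"
  shows "\<exists>i. x \<in> query_ball i \<and> query_ball i \<subseteq> ball x e \<and> query_height i = of_rat q"
proof -
  obtain r where "r \<in> \<rat>" "0 < r" "r < e/2"
    using Rats_dense_in_real[of 0 "e/2"] assms by auto
  moreover obtain a where "a \<in> \<rat>" "x - r < a" "a < x + r"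
    using Rats_dense_in_real[of "x - r" "x + r"] \<open>0 < r\<close> by auto
  ultimately obtain a' r' where a': "of_rat a' = a" and r': "of_rat r' = r"
    by (metis Rats_cases)
  define i where "i = to_nat (a', r', q)"
  have query: "query_center i = a" "query_radius i = r" "query_height i = of_rat q"
    by (simp_all add: query_center_def query_radius_def query_height_def i_def a' r')
  have "x \<in> query_ball i"
    using assms \<open>x - r < a\<close> \<open>a < x + r\<close> by (simp add: query_ball_def query dist_real_def)
  moreover have "query_ball i \<subseteq> ball x e"
    using \<open>x - r < a\<close> \<open>a < x + r\<close> \<open>r < e/2\<close> by (auto simp: query_ball_def query dist_real_def)
  ultimately show ?thesis
    using query by blast
qed

definition forbidden :: "(real \<times> real \<times> real) list \<Rightarrow> nat \<Rightarrow> real set" where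
  "forbidden ps i = (\<Union>p\<in>set ps. top_of_set M closure_of orb (fst p) h) \<union> (\<Union>m\<le>i. K m)"

lemma closedin_forbidden: "closedin (top_of_set M) (forbidden ps i)"
  unfolding forbidden_def using closedin_K by (intro closedin_Un closedin_Union) auto

lemma interior_of_forbidden:
  assumes "fst ` set ps \<subseteq> M"
  shows "top_of_set M interior_of forbidden ps i = {}"
  unfolding forbidden_def Union_Un_distrib[symmetric]
proof (rule interior_of_Union_closedin_eq_empty)
  fix S
  assume "S \<in> (\<lambda>p. top_of_set M closure_of orb (fst p) h) ` set ps \<union> K ` {..i}"
  then consider p where "p \<in> set ps" "S = top_of_set M closure_of orb (fst p) h" | m where "S = K m"
    by blast
  then show "closedin (top_of_set M) S \<and> top_of_set M interior_of S = {}"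
  proof cases
    case 1
    then show ?thesis
      using assms orb_nowhere_dense[of "fst p"] by (auto simp: nowhere_dense_in_def)
  next
    case 2
    then show ?thesis
      using closedin_K K_nowhere_dense[of m] by (auto simp: nowhere_dense_in_def closure_of_closedin)
  qed
qed simp

lemma exists_not_forbidden:
  assumes "fst ` set ps \<subseteq> M" "openin (top_of_set M) U" "U \<noteq> {}"
  shows "\<exists>y\<in>U. y \<notin> forbidden ps i"
proof (rule ccontr)
  assume "\<not> ?thesis"
  then have "U \<subseteq> top_of_set M interior_of forbidden ps i"
    using assms(2) by (intro interior_of_maximal) auto
  then show False
    using interior_of_forbidden[OF assms(1)] assms(3) by blast
qed

lemma mball_avoids_forbidden:
  assumes "y \<in> M" "y \<notin> forbidden ps i"
  shows "\<exists>r>0. mball y r \<inter> forbidden ps i = {}"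
proof -
  have "openin mtopology (M - forbidden ps i)"
    using closedin_forbidden by (simp add: mtopology_eq openin_diff)
  then obtain r where "r > 0" "mball y r \<subseteq> M - forbidden ps i"
    using assms unfolding openin_mtopology by blast
  then show ?thesis
    by blast
qed

definition admissible :: "(real \<times> real \<times> real) list \<Rightarrow> nat \<Rightarrow> real \<Rightarrow> bool" where
  "admissible ps i z \<longleftrightarrow>
     z \<in> query_ball i \<and> query_height i < bumps_min ps z \<and> z \<notin> forbidden ps i"

definition extendable :: "(real \<times> real \<times> real) list \<Rightarrow> nat \<Rightarrow> bool" where
  "extendable ps i \<longleftrightarrow> 0 < query_height i \<and> query_height i \<le> 1 \<and> (\<exists>z. admissible ps i z)"

text \<open>An unserved query contributes a bump with floor 1, which does not lower phi; its
  center is still taken in the query ball, so that phi is positive on a dense set.\<close>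
definition next_bump :: "(real \<times> real \<times> real) list \<Rightarrow> nat \<Rightarrow> real \<times> real \<times> real" where
  "next_bump ps i =
     (if extendable ps i then
        let z = SOME z. admissible ps i z
        in (z, query_height i, SOME r. 0 < r \<and> mball z r \<inter> forbidden ps i = {})
      else (SOME z. z \<in> M \<and> (query_ball i \<noteq> {} \<longrightarrow> z \<in> query_ball i), 1, 1))"

lemma next_bump_extendable:
  assumes "extendable ps i"
  obtains z r where "next_bump ps i = (z, query_height i, r)" "admissible ps i z"
    "0 < r" "mball z r \<inter> forbidden ps i = {}"
proof -
  define z where "z = (SOME z. admissible ps i z)"
  have z: "admissible ps i z"
    using assms unfolding extendable_def z_def by (blast intro: someI_ex)
  define r where "r = (SOME r. 0 < r \<and> mball z r \<inter> forbidden ps i = {})"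
  have "\<exists>r>0. mball z r \<inter> forbidden ps i = {}"
    using z by (intro mball_avoids_forbidden) (auto simp: admissible_def query_ball_def)
  then have r: "0 < r \<and> mball z r \<inter> forbidden ps i = {}"
    unfolding r_def by (rule someI_ex)
  have "next_bump ps i = (z, query_height i, r)"
    using assms by (simp add: next_bump_def z_def r_def Let_def)
  then show ?thesis
    using z r by (intro that) auto
qed

lemma next_bump_not_extendable:
  assumes "\<not> extendable ps i"
  obtains z where "next_bump ps i = (z, 1, 1)" "z \<in> M" "query_ball i \<noteq> {} \<Longrightarrow> z \<in> query_ball i"
proof -
  define z where "z = (SOME z. z \<in> M \<and> (query_ball i \<noteq> {} \<longrightarrow> z \<in> query_ball i))"
  have "\<exists>z. z \<in> M \<and> (query_ball i \<noteq> {} \<longrightarrow> z \<in> query_ball i)"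
  proof (cases "query_ball i = {}")
    case True
    with nonempty show ?thesis
      by blast
  next
    case False
    then obtain z where "z \<in> query_ball i"
      by blast
    then show ?thesis
      unfolding query_ball_def by blast
  qed
  then have z: "z \<in> M \<and> (query_ball i \<noteq> {} \<longrightarrow> z \<in> query_ball i)"
    unfolding z_def by (rule someI_ex)
  have "next_bump ps i = (z, 1, 1)"
    using assms by (simp add: next_bump_def z_def)
  then show ?thesis
    using z by (intro that) auto
qed

primrec stage :: "nat \<Rightarrow> (real \<times> real \<times> real) list" where
  "stage 0 = []"
| "stage (Suc i) = next_bump (stage i) i # stage i"

definition center :: "nat \<Rightarrow> real" where "center i = fst (next_bump (stage i) i)"
definition base :: "nat \<Rightarrow> real" where "base i = fst (snd (next_bump (stage i) i))"
definition width :: "nat \<Rightarrow> real" where "width i = snd (snd (next_bump (stage i) i))"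

lemma next_bump_stage: "next_bump (stage i) i = (center i, base i, width i)"
  by (simp add: center_def base_def width_def)

lemma set_stage: "set (stage i) = (\<lambda>j. (center j, base j, width j)) ` {..<i}"
  by (induction i) (auto simp: next_bump_stage lessThan_Suc)

lemma stage_extendable:
  assumes "extendable (stage i) i"
  shows "admissible (stage i) i (center i)" "base i = query_height i" "0 < width i"
    "mball (center i) (width i) \<inter> forbidden (stage i) i = {}"
  using next_bump_extendable[OF assms] by (metis next_bump_stage prod.inject)+

lemma stage_not_extendable:
  assumes "\<not> extendable (stage i) i"
  shows "base i = 1" "width i = 1" "center i \<in> M" "query_ball i \<noteq> {} \<Longrightarrow> center i \<in> query_ball i"
  using next_bump_not_extendable[OF assms] by (metis next_bump_stage prod.inject)+

lemma center_in: "center i \<in> M"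
  using stage_extendable(1) stage_not_extendable(3)
  by (cases "extendable (stage i) i") (auto simp: admissible_def query_ball_def)

lemma center_in_query_ball: "query_ball i \<noteq> {} \<Longrightarrow> center i \<in> query_ball i"
  using stage_extendable(1) stage_not_extendable(4)
  by (cases "extendable (stage i) i") (auto simp: admissible_def)

lemma base_pos: "0 < base i" and width_pos: "0 < width i"
  using stage_extendable(2,3) stage_not_extendable(1,2)
  by (cases "extendable (stage i) i"; force simp: extendable_def)+

lemma centers_in: "fst ` set (stage i) \<subseteq> M"
  using center_in by (auto simp: set_stage)

text \<open>Later bumps are chosen so narrow that they do not disturb the values at earlier
  centers or on the sets K: there they are at least 1.\<close>
lemma bump_ge_1_if_orb_forbidden:
  assumes "y \<in> M" "orb y h \<subseteq> forbidden (stage i) i"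
  shows "1 \<le> bump (center i, base i, width i) y"
proof (cases "extendable (stage i) i")
  case True
  then have "mball (center i) (width i) \<inter> orb y h = {}"
    using stage_extendable(4) assms(2) by blast
  then have "width i \<le> orbit_dist y (center i)"
    using orbit_dist_ge_if_disjoint center_in assms(1) by (metis orbit_dist_commute)
  then show ?thesis
    using width_pos[of i] by (simp add: le_max_iff_disj le_divide_eq)
next
  case False
  then show ?thesis
    using stage_not_extendable(1) by simp
qed

lemma bump_ge_1_at_earlier_center:
  assumes "j < i"
  shows "1 \<le> bump (center i, base i, width i) (center j)"
proof (rule bump_ge_1_if_orb_forbidden[OF center_in])
  have "orb (center j) h \<subseteq> top_of_set M closure_of orb (center j) h"
    using orb_subset[OF center_in] by (simp add: closure_of_subset)
  then show "orb (center j) h \<subseteq> forbidden (stage i) i"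
    using assms by (force simp: forbidden_def set_stage)
qed

lemma bump_ge_1_on_K:
  assumes "m \<le> i" "y \<in> K m"
  shows "1 \<le> bump (center i, base i, width i) y"
proof (rule bump_ge_1_if_orb_forbidden)
  show "y \<in> M"
    using assms(2) K_subset by blast
  have "orb y h \<subseteq> K m"
    using orb_subset_K assms(2) .
  then show "orb y h \<subseteq> forbidden (stage i) i"
    using assms(1) by (auto simp: forbidden_def)
qed

definition phi :: "real \<Rightarrow> real" where
  "phi y = Inf (insert 1 (range (\<lambda>i. bump (center i, base i, width i) y)))"

lemma base_le_bump: "base i \<le> bump (center i, base i, width i) y"
  by simp

lemma bump_pos: "0 < bump (center i, base i, width i) y"
  using base_pos base_le_bump by (rule less_le_trans)

lemma bdd_below_bumps: "bdd_below (insert 1 (range (\<lambda>i. bump (center i, base i, width i) y)))"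
  using bump_pos by (intro bdd_belowI[of _ 0]) (auto intro: less_imp_le)

lemma phi_le_1: "phi y \<le> 1"
  unfolding phi_def by (rule cInf_lower[OF _ bdd_below_bumps]) simp

lemma phi_le_bump: "phi y \<le> bump (center i, base i, width i) y"
  unfolding phi_def by (rule cInf_lower[OF _ bdd_below_bumps]) simp

lemma phi_greatest: "c \<le> 1 \<Longrightarrow> (\<And>i. c \<le> bump (center i, base i, width i) y) \<Longrightarrow> c \<le> phi y"
  unfolding phi_def by (rule cInf_greatest) auto

lemma phi_nonneg: "0 \<le> phi y"
  using bump_pos by (intro phi_greatest) (auto intro: less_imp_le)

lemma phi_less_iff: "phi y < a \<longleftrightarrow> 1 < a \<or> (\<exists>i. bump (center i, base i, width i) y < a)"
  unfolding phi_def by (subst cInf_less_iff[OF _ bdd_below_bumps]) auto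

lemma phi_le_bumps_min: "phi y \<le> bumps_min (stage i) y"
  using phi_le_1 phi_le_bump by (intro bumps_min_greatest) (auto simp: set_stage)

lemma phi_map: "y \<in> M \<Longrightarrow> phi (h y) = phi y"
  using orbit_dist_map_left center_in by (simp add: phi_def)

lemma upper_semicont_phi: "upper_semicont_on M phi"
  unfolding upper_semicont_on_def
proof
  fix a
  have "openin (top_of_set M) {y \<in> M. bump (center i, base i, width i) y < a}" for i
    using continuous_openin_preimage_gen[OF continuous_on_bump[OF center_in] open_lessThan, of i]
    by (simp add: vimage_def Int_def conj_commute)
  moreover have "openin (top_of_set M) {y \<in> M. 1 < a}"
    by (cases "1 < a") auto
  moreover have "{y \<in> M. phi y < a} =
      {y \<in> M. 1 < a} \<union> (\<Union>i. {y \<in> M. bump (center i, base i, width i) y < a})"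
    by (auto simp: phi_less_iff)
  ultimately show "openin (top_of_set M) {y \<in> M. phi y < a}"
    by (metis (no_types, lifting) openin_Un openin_Union imageE)
qed

lemma phi_pos_if_eventually_bump_ge_1:
  assumes "\<And>i. N \<le> i \<Longrightarrow> 1 \<le> bump (center i, base i, width i) y"
  shows "0 < phi y"
proof -
  define c where "c = Min (insert 1 (base ` {..<N}))"
  have "0 < c"
    unfolding c_def using base_pos by (subst Min_gr_iff) auto
  moreover have "c \<le> phi y"
  proof (rule phi_greatest)
    show "c \<le> 1"
      unfolding c_def by simp
    fix i
    show "c \<le> bump (center i, base i, width i) y"
    proof (cases "i < N")
      case True
      then have "c \<le> base i"
        unfolding c_def by simp
      then show ?thesis
        using base_le_bump by (rule order_trans)
    next
      case False
      then show ?thesis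
        using assms[of i] \<open>c \<le> 1\<close> by simp
    qed
  qed
  ultimately show ?thesis
    by simp
qed

lemma phi_center_pos: "0 < phi (center i)"
  using bump_ge_1_at_earlier_center by (intro phi_pos_if_eventually_bump_ge_1[of "Suc i"]) auto

lemma phi_pos_on_K: "y \<in> K m \<Longrightarrow> 0 < phi y"
  using bump_ge_1_on_K by (intro phi_pos_if_eventually_bump_ge_1[of m])

text \<open>At an extendable stage the new bump is the lowest one at its own center, which
  earlier bumps exceed by admissibility and later ones by narrowness.\<close>
lemma phi_center_extendable:
  assumes "extendable (stage i) i"
  shows "phi (center i) = query_height i"
proof (rule antisym)
  have "bump (center i, base i, width i) (center i) = query_height i"
    using stage_extendable(2)[OF assms] orbit_dist_self[OF center_in] base_pos[of i] by simp
  then show "phi (center i) \<le> query_height i"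
    using phi_le_bump[of "center i" i] by simp
  show "query_height i \<le> phi (center i)"
  proof (rule phi_greatest)
    show "query_height i \<le> 1"
      using assms by (simp add: extendable_def)
    fix j
    consider "j < i" | "j = i" | "i < j"
      by linarith
    then show "query_height i \<le> bump (center j, base j, width j) (center i)"
    proof cases
      case 1
      then have "bumps_min (stage i) (center i) \<le> bump (center j, base j, width j) (center i)"
        by (intro bumps_min_le_bump) (auto simp: set_stage)
      then show ?thesis
        using stage_extendable(1)[OF assms] by (simp add: admissible_def)
    next
      case 2
      then show ?thesis
        using stage_extendable(2)[OF assms] by simp
    next
      case 3
      then show ?thesis
        using bump_ge_1_at_earlier_center \<open>query_height i \<le> 1\<close> by (meson order_trans)
    qed
  qed
qed

lemma dense_phi_pos: "M \<subseteq> closure {y \<in> M. 0 < phi y}"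
proof
  fix x
  assume "x \<in> M"
  show "x \<in> closure {y \<in> M. 0 < phi y}"
    unfolding closure_approachable
  proof (intro allI impI)
    fix e :: real
    assume "e > 0"
    then obtain i where "x \<in> query_ball i" "query_ball i \<subseteq> ball x e"
      using exists_query[OF \<open>x \<in> M\<close>] by blast
    then have "dist (center i) x < e"
      using center_in_query_ball by (force simp: dist_commute)
    then show "\<exists>y\<in>{y \<in> M. 0 < phi y}. dist y x < e"
      using center_in[of i] phi_center_pos[of i] by blast
  qed
qed

text \<open>The open set of candidates for a query below phi is nonempty, so it cannot lie inside
  the nowhere dense forbidden set.\<close>
lemma extendable_if_below_phi:
  assumes "x \<in> query_ball i" "0 < query_height i" "query_height i < phi x"
  shows "extendable (stage i) i"
proof -
  let ?U = "query_ball i \<inter> {y \<in> M. query_height i < bumps_min (stage i) y}"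
  have "x \<in> ?U"
    using assms phi_le_bumps_min[of x i] by (auto simp: query_ball_def)
  moreover have "openin (top_of_set M) ?U"
    using continuous_openin_preimage_gen[OF continuous_on_bumps_min[OF centers_in] open_greaterThan]
    by (intro openin_Int openin_query_ball) (simp add: vimage_def Int_def conj_commute)
  ultimately obtain z where "z \<in> ?U" "z \<notin> forbidden (stage i) i"
    using exists_not_forbidden[OF centers_in] by blast
  moreover have "query_height i \<le> 1"
    using assms(3) phi_le_1[of x] by linarith
  ultimately show ?thesis
    using assms(2) by (auto simp: extendable_def admissible_def)
qed

lemma graph_phi_dense:
  assumes x: "x \<in> M" and t: "0 \<le> t" "t \<le> phi x"
  shows "(x, t) \<in> closure {(y, phi y) | y. y \<in> M}"
  unfolding closure_approachable
proof (intro allI impI)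
  fix e :: real
  assume "e > 0"
  show "\<exists>p\<in>{(y, phi y) | y. y \<in> M}. dist p (x, t) < e"
  proof (cases "t = phi x")
    case True
    then show ?thesis
      using x \<open>e > 0\<close> by auto
  next
    case False
    then obtain q where q: "max 0 (t - e/2) < of_rat q" "of_rat q < min (t + e/2) (phi x)"
      using Rats_dense_in_real[of "max 0 (t - e/2)" "min (t + e/2) (phi x)"] t \<open>e > 0\<close>
      by (auto elim: Rats_cases)
    obtain i where i: "x \<in> query_ball i" "query_ball i \<subseteq> ball x (e/2)" "query_height i = of_rat q"
      using exists_query[OF x, of "e/2" q] \<open>e > 0\<close> by auto
    have ext: "extendable (stage i) i"
      using q by (intro extendable_if_below_phi[OF i(1)]) (simp_all add: i(3))
    then have "center i \<in> ball x (e/2)"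
      using stage_extendable(1) i(2) unfolding admissible_def by blast
    then have "dist (center i) x < e/2"
      by (simp add: dist_commute)
    moreover have "dist (phi (center i)) t < e/2"
      unfolding phi_center_extendable[OF ext] i(3) dist_real_def abs_diff_less_iff using q by auto
    ultimately have "dist (center i, phi (center i)) (x, t) < e"
      by (simp add: dist_Pair_Pair sqrt_sum_squares_half_less)
    then show ?thesis
      using center_in by blast
  qed
qed

end

section \<open>Fences over the Cantor set\<close>

lemma admissible_pair_zero:
  assumes "upper_semicont_on cantor_set phiU" "\<And>x. x \<in> cantor_set \<Longrightarrow> 0 \<le> phiU x \<and> phiU x \<le> 1"
  shows "admissible_pair (\<lambda>_. 0) phiU"
proof -
  have "openin (top_of_set cantor_set) {x \<in> cantor_set. a < (0::real)}" for a
    by (cases "a < 0") auto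
  then show ?thesis
    using assms by (auto simp: admissible_pair_def lower_semicont_on_def)
qed

lemma Lelek_fence_zero:
  assumes "cantor_set \<subseteq> closure {x \<in> cantor_set. 0 < phiU x}"
    and "\<And>x t. x \<in> cantor_set \<Longrightarrow> 0 \<le> t \<Longrightarrow> t \<le> phiU x \<Longrightarrow>
           (x, t) \<in> closure {(x, phiU x) | x. x \<in> cantor_set}"
  shows "Lelek_fence (\<lambda>_. 0) phiU"
  unfolding Lelek_fence_def
proof (intro conjI ballI)
  show "\<exists>D\<subseteq>cantor_set. cantor_set \<subseteq> closure D \<and> (\<forall>x\<in>D. 0 < phiU x)"
    using assms(1) by (intro exI[of _ "{x \<in> cantor_set. 0 < phiU x}"]) auto
  show "fence (\<lambda>_. 0) phiU \<subseteq> closure {(x, phiU x) | x. x \<in> cantor_set}"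
    using assms(2) by (auto simp: fence_def)
qed simp

lemma continuous_on_map_fst:
  assumes "continuous_on S f" "fst ` P \<subseteq> S"
  shows "continuous_on P (\<lambda>p. (f (fst p), snd p))"
proof -
  have "continuous_on P (\<lambda>p. f (fst p))"
    using continuous_on_compose2[OF assms(1) continuous_on_fst[OF continuous_on_id] assms(2)] .
  then show ?thesis
    by (intro continuous_on_Pair continuous_on_snd continuous_on_id)
qed

lemma homeomorphism_fence:
  assumes hom: "homeomorphism cantor_set cantor_set h g"
    and phiL: "\<And>x. x \<in> cantor_set \<Longrightarrow> phiL (h x) = phiL x"
    and phiU: "\<And>x. x \<in> cantor_set \<Longrightarrow> phiU (h x) = phiU x"
  shows "homeomorphism (fence phiL phiU) (fence phiL phiU)
           (\<lambda>p. (h (fst p), snd p)) (\<lambda>p. (g (fst p), snd p))"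
proof -
  have h: "\<And>x. x \<in> cantor_set \<Longrightarrow> h x \<in> cantor_set" and g: "\<And>x. x \<in> cantor_set \<Longrightarrow> g x \<in> cantor_set"
    and gh: "\<And>x. x \<in> cantor_set \<Longrightarrow> g (h x) = x" and hg: "\<And>x. x \<in> cantor_set \<Longrightarrow> h (g x) = x"
    and "continuous_on cantor_set h" "continuous_on cantor_set g"
    using hom by (auto simp: homeomorphism_def)
  have phiL_g: "phiL (g x) = phiL x" and phiU_g: "phiU (g x) = phiU x" if "x \<in> cantor_set" for x
    using phiL[OF g[OF that]] phiU[OF g[OF that]] hg[OF that] by simp_all
  have fst_fence: "fst ` fence phiL phiU \<subseteq> cantor_set"
    by (auto simp: fence_def)
  show ?thesis
  proof (rule homeomorphismI)
    show "continuous_on (fence phiL phiU) (\<lambda>p. (h (fst p), snd p))"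
      using \<open>continuous_on cantor_set h\<close> fst_fence by (rule continuous_on_map_fst)
    show "continuous_on (fence phiL phiU) (\<lambda>p. (g (fst p), snd p))"
      using \<open>continuous_on cantor_set g\<close> fst_fence by (rule continuous_on_map_fst)
    have "(h x, t) \<in> fence phiL phiU" "(g x, t) \<in> fence phiL phiU" if "(x, t) \<in> fence phiL phiU" for x t
      using that h g phiL phiU phiL_g phiU_g by (simp_all add: fence_def)
    then show "(\<lambda>p. (h (fst p), snd p)) ` fence phiL phiU \<subseteq> fence phiL phiU"
      "(\<lambda>p. (g (fst p), snd p)) ` fence phiL phiU \<subseteq> fence phiL phiU"
      by auto
    show "(g (fst (h (fst p), snd p)), snd (h (fst p), snd p)) = p"
      "(h (fst (g (fst p), snd p)), snd (g (fst p), snd p)) = p" if "p \<in> fence phiL phiU" for p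
      using that fst_fence gh hg by auto
  qed
qed

lemma isometry_fence:
  assumes "isometry_on cantor_set d h"
  shows "isometry_on (fence phiL phiU) (max_metric d) (\<lambda>p. (h (fst p), snd p))"
  unfolding isometry_on_def
proof (intro ballI)
  fix p q
  assume "p \<in> fence phiL phiU" "q \<in> fence phiL phiU"
  then have "fst p \<in> cantor_set" "fst q \<in> cantor_set"
    by (auto simp: fence_def)
  then show "max_metric d (h (fst p), snd p) (h (fst q), snd q) = max_metric d p q"
    using assms by (simp add: isometry_on_def max_metric_def)
qed

lemma is_factor_fence:
  assumes "admissible_pair phiL phiU"
  shows "is_factor cantor_set h (fence phiL phiU) (\<lambda>p. (h (fst p), snd p))"
  unfolding is_factor_def
proof (intro exI[of _ fst] conjI)
  show "fst ` fence phiL phiU = cantor_set"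
  proof
    show "fst ` fence phiL phiU \<subseteq> cantor_set"
      by (auto simp: fence_def)
    show "cantor_set \<subseteq> fst ` fence phiL phiU"
    proof
      fix x
      assume "x \<in> cantor_set"
      then have "0 \<le> phiL x \<and> phiL x \<le> phiU x \<and> phiU x \<le> 1"
        using assms by (simp add: admissible_pair_def)
      then have "(x, phiL x) \<in> fence phiL phiU"
        using \<open>x \<in> cantor_set\<close> by (simp add: fence_def)
      then show "x \<in> fst ` fence phiL phiU"
        by (metis fst_conv image_eqI)
    qed
  qed
qed (simp_all add: continuous_on_fst)

lemma lelek_construction_cantor_set:
  assumes d: "compatible_metric cantor_set d"
    and "h ` cantor_set \<subseteq> cantor_set" "isometry_on cantor_set d h"
    and "\<forall>x\<in>cantor_set. nowhere_dense_in (orb x h) cantor_set"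
    and "\<forall>n. closed (K n) \<and> h ` K n \<subseteq> K n \<and> nowhere_dense_in (K n) cantor_set"
  shows "lelek_construction cantor_set d h K"
proof -
  have metric: "Metric_space cantor_set d" "Metric_space.mtopology cantor_set d = top_of_set cantor_set"
    using d by (auto simp: compatible_metric_def)
  show ?thesis
  proof (rule lelek_construction.intro[OF isometric_dynamics.intro[OF metric(1)]])
    show "isometric_dynamics_axioms cantor_set d h"
      using assms(2,3) compact_cantor_set
      by unfold_locales (simp_all add: metric(2) compactin_subtopology)
    show "lelek_construction_axioms cantor_set d h K"
      using metric(2) cantor_set_nonempty assms(4,5) by unfold_locales auto
  qed
qed

lemma exists_isometric_Lelek_fence_extension:
  fixes d :: "real \<Rightarrow> real \<Rightarrow> real" and h :: "real \<Rightarrow> real" and K :: "nat \<Rightarrow> real set"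
  assumes d: "compatible_metric cantor_set d"
    and hom: "homeomorphism cantor_set cantor_set h g"
    and iso: "isometry_on cantor_set d h"
    and orb: "\<forall>x\<in>cantor_set. nowhere_dense_in (orb x h) cantor_set"
    and K: "\<forall>n. closed (K n) \<and> h ` K n \<subseteq> K n \<and> nowhere_dense_in (K n) cantor_set"
  shows "\<exists>phiL phiU hh. admissible_pair phiL phiU \<and> Lelek_fence phiL phiU \<and>
           (\<exists>g. homeomorphism (fence phiL phiU) (fence phiL phiU) hh g) \<and>
           isometry_on (fence phiL phiU) (max_metric d) hh \<and>
           is_factor cantor_set h (fence phiL phiU) hh \<and>
           (\<forall>x\<in>(\<Union>n. K n). phiU x > 0)"
proof -
  have "h ` cantor_set \<subseteq> cantor_set"
    using hom by (simp add: homeomorphism_def)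
  then interpret lelek_construction cantor_set d h K
    by (rule lelek_construction_cantor_set[OF d _ iso orb K])
  have "admissible_pair (\<lambda>_. 0) phi"
    using upper_semicont_phi phi_nonneg phi_le_1 by (intro admissible_pair_zero) auto
  moreover have "Lelek_fence (\<lambda>_. 0) phi"
    using dense_phi_pos graph_phi_dense by (rule Lelek_fence_zero)
  moreover have "homeomorphism (fence (\<lambda>_. 0) phi) (fence (\<lambda>_. 0) phi)
      (\<lambda>p. (h (fst p), snd p)) (\<lambda>p. (g (fst p), snd p))"
    by (rule homeomorphism_fence[OF hom]) (simp_all add: phi_map)
  moreover have "isometry_on (fence (\<lambda>_. 0) phi) (max_metric d) (\<lambda>p. (h (fst p), snd p))"
    using iso by (rule isometry_fence)
  moreover have "is_factor cantor_set h (fence (\<lambda>_. 0) phi) (\<lambda>p. (h (fst p), snd p))"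
    using \<open>admissible_pair (\<lambda>_. 0) phi\<close> by (rule is_factor_fence)
  moreover have "\<forall>x\<in>(\<Union>n. K n). phi x > 0"
    using phi_pos_on_K by blast
  ultimately show ?thesis
    by blast
qed

theorem theorem6p5:
  fixes d :: "real \<Rightarrow> real \<Rightarrow> real" and h :: "real \<Rightarrow> real"
  assumes "compatible_metric cantor_set d"
    and "\<exists>g. homeomorphism cantor_set cantor_set h g"
    and "isometry_on cantor_set d h"
    and "\<forall>x\<in>cantor_set. nowhere_dense_in (orb x h) cantor_set"
  shows "(\<exists>phiL phiU hh. admissible_pair phiL phiU \<and> Lelek_fence phiL phiU \<and>
            (\<exists>g. homeomorphism (fence phiL phiU) (fence phiL phiU) hh g) \<and>
            isometry_on (fence phiL phiU) (max_metric d) hh \<and>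
            is_factor cantor_set h (fence phiL phiU) hh)
       \<and> (\<forall>K :: nat \<Rightarrow> real set.
            (\<forall>n. closed (K n) \<and> h ` K n \<subseteq> K n \<and> nowhere_dense_in (K n) cantor_set) \<longrightarrow>
            (\<exists>phiL phiU hh. admissible_pair phiL phiU \<and> Lelek_fence phiL phiU \<and>
              (\<exists>g. homeomorphism (fence phiL phiU) (fence phiL phiU) hh g) \<and>
              isometry_on (fence phiL phiU) (max_metric d) hh \<and>
              is_factor cantor_set h (fence phiL phiU) hh \<and>
              (\<forall>x\<in>(\<Union>n. K n). phiU x > 0)))"
proof -
  obtain g where hom: "homeomorphism cantor_set cantor_set h g"
    using assms(2) by blast
  note extension = exists_isometric_Lelek_fence_extension[OF assms(1) hom assms(3,4)]
  have "\<forall>n. closed ({} :: real set) \<and> h ` {} \<subseteq> {} \<and> nowhere_dense_in {} cantor_set"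
    by (simp add: nowhere_dense_in_def)
  from extension[OF this] show ?thesis
    using extension by blast
qed

end
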